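(* For the finite-alphabet channel $P_{Y|X_1,X_2}$ and metric $q$, $\mathcal R_{LM}\subseteq\mathcal R^{bin}_{cog}$, where $\mathcal R_{LM}$ is the closure of the convex hull of the union over $P_{X_1},P_{X_2}$ of the sets of $(R_1,R_2)$ satisfying $R_1<\min_{f\in\mathcal D_{(1)}}[I_f(X_1;Y|X_2)+I_f(X_1;X_2)]$, $R_2<\min_{f\in\mathcal D_{(2)}}[I_f(X_2;Y|X_1)+I_f(X_1;X_2)]$, $R_1+R_2<\min_{f\in\mathcal D_{(0)}}[I_f(X_1,X_2;Y)+I_f(X_1;X_2)]$, with $P_{X_1,X_2,Y}=P_{X_1}P_{X_2}P_{Y|X_1,X_2}$ and $\mathcal D_{(1)}=\{f: f_{X_1}=P_{X_1}, f_{X_2,Y}=P_{X_2,Y},\mathbb E_f q\ge\mathbb E_P q\}$, $\mathcal D_{(2)}=\{f: f_{X_2}=P_{X_2}, f_{X_1,Y}=P_{X_1,Y},\mathbb E_f q\ge\mathbb E_P q\}$, $\mathcal D_{(0)}=\{f: f_{X_1}=P_{X_1}, f_{X_2}=P_{X_2}, f_Y=P_Y,\mathbb E_f q\ge\mathbb E_P q, I_f(X_1;Y)\le R_1, I_f(X_2;Y)\le R_2\}$; and $\mathcal R^{bin}_{cog}$ is the closure of the convex hull of $\bigcup_P\mathcal R^{bin,*}_{cog}(P)$ over all $P=P_{X_1,X_2}P_{Y|X_1,X_2}$, $\mathcal R^{bin,*}_{cog}(P)$ being the set of $(R_1,R_2)$ for which there exist $R_{1,a},R_{1,b}\ge0$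 with $R_1=R_{1,a}+R_{1,b}$, $R_{1,a}\le R_1'(P)$, $R_{1,b}+R_2\le R_2'(P)$, and either $R_{1,a}\le R_1''(P,R_{1,b}+R_2)$ or $R_{1,b}+R_2\le R_2''(P,R_{1,a})$.
   Context: All distributions $f$ are on $\mathcal X_1\times\mathcal X_2\times\mathcal Y$ (finite), $q:\mathcal X_1\times\mathcal X_2\times\mathcal Y\to\mathbb R$, expectations $\mathbb E_f q=\mathbb E_f q(X_1,X_2,Y)$. For a distribution $Q$: $\mathcal G_q(Q)=\{f: f_{X_1,X_2}=Q_{X_1,X_2},\ \mathbb E_f q\ge\mathbb E_Q q\}$; $\mathcal L_1(Q)=\{f\in\mathcal G_q(Q):f_{X_2,Y}=Q_{X_2,Y}\}$; $\mathcal L_2(Q)=\{f\in\mathcal G_q(Q):f_{X_1,Y}=Q_{X_1,Y}\}$; $\mathcal L_0(Q)=\{f\in\mathcal G_q(Q):f_Y=Q_Y\}$. $R_1'(P)=\min_{\tilde P\in\mathcal L_1(P)}I_{\tilde P}(X_1;Y,X_2)$; $R_2'(P)=\min_{\tilde P\in\mathcal L_2(P)}I_{\tilde P}(X_2;Y|X_1)$; $R_1''(P,R_2)=\min_{\tilde P\in\mathcal L_0(P)}[I_{\tilde P}(X_1;Y)+|I_{\tilde P}(X_2;Y|X_1)-R_2|^+]$; $R_2''(P,R_1)=\min_{\tilde P\in\mathcal L_0(P)}[I_{\tilde P}(X_2;Y)-I_{\tilde P}(X_2;X_1)+|I_{\tilde P}(X_1;Y,X_2)-R_1|^+]$; $|t|^+=\max\{0,t\}$.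 *)

theory Defs
  imports "HOL-Analysis.Analysis"
begin

text \<open>Finite alphabets are the finite types 'a (X1), 'b (X2), 'c (Y).
  A joint distribution f on X1 x X2 x Y is a function 'a => 'b => 'c => real.
  Information quantities use the natural logarithm.\<close>

definition pmf1 :: "('u::finite \<Rightarrow> real) \<Rightarrow> bool" where
  "pmf1 p \<longleftrightarrow> (\<forall>u. 0 \<le> p u) \<and> (\<Sum>u\<in>UNIV. p u) = 1"

definition pmf2 :: "('u::finite \<Rightarrow> 'v::finite \<Rightarrow> real) \<Rightarrow> bool" where
  "pmf2 p \<longleftrightarrow> (\<forall>u v. 0 \<le> p u v) \<and> (\<Sum>u\<in>UNIV. \<Sum>v\<in>UNIV. p u v) = 1"

definition pmf3 :: "('a::finite \<Rightarrow> 'b::finite \<Rightarrow> 'c::finite \<Rightarrow> real) \<Rightarrow> bool" where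
  "pmf3 f \<longleftrightarrow> (\<forall>x1 x2 y. 0 \<le> f x1 x2 y) \<and> (\<Sum>x1\<in>UNIV. \<Sum>x2\<in>UNIV. \<Sum>y\<in>UNIV. f x1 x2 y) = 1"

definition channel :: "('a::finite \<Rightarrow> 'b::finite \<Rightarrow> 'c::finite \<Rightarrow> real) \<Rightarrow> bool" where
  "channel W \<longleftrightarrow> (\<forall>x1 x2. pmf1 (W x1 x2))"

definition m12 :: "('a::finite \<Rightarrow> 'b::finite \<Rightarrow> 'c::finite \<Rightarrow> real) \<Rightarrow> 'a \<Rightarrow> 'b \<Rightarrow> real" where
  "m12 f x1 x2 = (\<Sum>y\<in>UNIV. f x1 x2 y)"
definition m1Y :: "('a::finite \<Rightarrow> 'b::finite \<Rightarrow> 'c::finite \<Rightarrow> real) \<Rightarrow> 'a \<Rightarrow> 'c \<Rightarrow> real" where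
  "m1Y f x1 y = (\<Sum>x2\<in>UNIV. f x1 x2 y)"
definition m2Y :: "('a::finite \<Rightarrow> 'b::finite \<Rightarrow> 'c::finite \<Rightarrow> real) \<Rightarrow> 'b \<Rightarrow> 'c \<Rightarrow> real" where
  "m2Y f x2 y = (\<Sum>x1\<in>UNIV. f x1 x2 y)"
definition m1 :: "('a::finite \<Rightarrow> 'b::finite \<Rightarrow> 'c::finite \<Rightarrow> real) \<Rightarrow> 'a \<Rightarrow> real" where
  "m1 f x1 = (\<Sum>x2\<in>UNIV. \<Sum>y\<in>UNIV. f x1 x2 y)"
definition m2 :: "('a::finite \<Rightarrow> 'b::finite \<Rightarrow> 'c::finite \<Rightarrow> real) \<Rightarrow> 'b \<Rightarrow> real" where
  "m2 f x2 = (\<Sum>x1\<in>UNIV. \<Sum>y\<in>UNIV. f x1 x2 y)"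
definition mY :: "('a::finite \<Rightarrow> 'b::finite \<Rightarrow> 'c::finite \<Rightarrow> real) \<Rightarrow> 'c \<Rightarrow> real" where
  "mY f y = (\<Sum>x1\<in>UNIV. \<Sum>x2\<in>UNIV. f x1 x2 y)"

definition Eq :: "('a::finite \<Rightarrow> 'b::finite \<Rightarrow> 'c::finite \<Rightarrow> real) \<Rightarrow> ('a \<Rightarrow> 'b \<Rightarrow> 'c \<Rightarrow> real) \<Rightarrow> real" where
  "Eq q f = (\<Sum>x1\<in>UNIV. \<Sum>x2\<in>UNIV. \<Sum>y\<in>UNIV. f x1 x2 y * q x1 x2 y)"

definition mi :: "('u::finite \<Rightarrow> 'v::finite \<Rightarrow> real) \<Rightarrow> real" where
  "mi p = (\<Sum>u\<in>UNIV. \<Sum>v\<in>UNIV. if p u v = 0 then 0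
      else p u v * ln (p u v / ((\<Sum>v'\<in>UNIV. p u v') * (\<Sum>u'\<in>UNIV. p u' v))))"

definition cmi :: "('u::finite \<Rightarrow> 'v::finite \<Rightarrow> 'w::finite \<Rightarrow> real) \<Rightarrow> real" where
  "cmi p = (\<Sum>u\<in>UNIV. \<Sum>v\<in>UNIV. \<Sum>w\<in>UNIV. if p u v w = 0 then 0
      else p u v w * ln (p u v w * (\<Sum>u'\<in>UNIV. \<Sum>v'\<in>UNIV. p u' v' w)
                          / ((\<Sum>v'\<in>UNIV. p u v' w) * (\<Sum>u'\<in>UNIV. p u' v w))))"

definition I_1Y_2 where "I_1Y_2 f = cmi (\<lambda>x1 y x2. f x1 x2 y)"
definition I_2Y_1 where "I_2Y_1 f = cmi (\<lambda>x2 y x1. f x1 x2 y)"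
definition I_12 where "I_12 f = mi (m12 f)"
definition I_21 where "I_21 f = mi (\<lambda>x2 x1. m12 f x1 x2)"
definition I_12_Y where "I_12_Y f = mi (\<lambda>u y. f (fst u) (snd u) y)"
definition I_1_Y2 where "I_1_Y2 f = mi (\<lambda>x1 v. f x1 (snd v) (fst v))"
definition I_1Y where "I_1Y f = mi (m1Y f)"
definition I_2Y where "I_2Y f = mi (m2Y f)"

definition Gq where
  "Gq q Q = {f. pmf3 f \<and> m12 f = m12 Q \<and> Eq q f \<ge> Eq q Q}"
definition L1 where "L1 q Q = {f \<in> Gq q Q. m2Y f = m2Y Q}"
definition L2 where "L2 q Q = {f \<in> Gq q Q. m1Y f = m1Y Q}"
definition L0 where "L0 q Q = {f \<in> Gq q Q. mY f = mY Q}"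

(* minima, taken as infima in ereal *)
definition R1' :: "_ \<Rightarrow> _ \<Rightarrow> ereal" where
  "R1' q P = (INF f\<in>L1 q P. ereal (I_1_Y2 f))"
definition R2' :: "_ \<Rightarrow> _ \<Rightarrow> ereal" where
  "R2' q P = (INF f\<in>L2 q P. ereal (I_2Y_1 f))"
definition R1'' :: "_ \<Rightarrow> _ \<Rightarrow> real \<Rightarrow> ereal" where
  "R1'' q P R2 = (INF f\<in>L0 q P. ereal (I_1Y f + max 0 (I_2Y_1 f - R2)))"
definition R2'' :: "_ \<Rightarrow> _ \<Rightarrow> real \<Rightarrow> ereal" where
  "R2'' q P R1 = (INF f\<in>L0 q P. ereal (I_2Y f - I_21 f + max 0 (I_1_Y2 f - R1)))"

definition Rcog_star :: "('a::finite \<Rightarrow> 'b::finite \<Rightarrow> 'c::finite \<Rightarrow> real) \<Rightarrow> ('a \<Rightarrow> 'b \<Rightarrow> 'c \<Rightarrow> real) \<Rightarrow> (real \<times> real) set" where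
  "Rcog_star q P = {(R1, R2). 0 \<le> R2 \<and> (\<exists>R1a R1b. 0 \<le> R1a \<and> 0 \<le> R1b \<and> R1 = R1a + R1b \<and>
      ereal R1a \<le> R1' q P \<and> ereal (R1b + R2) \<le> R2' q P \<and>
      (ereal R1a \<le> R1'' q P (R1b + R2) \<or> ereal (R1b + R2) \<le> R2'' q P R1a))}"

definition Rcog_bin :: "('a::finite \<Rightarrow> 'b::finite \<Rightarrow> 'c::finite \<Rightarrow> real) \<Rightarrow> ('a \<Rightarrow> 'b \<Rightarrow> 'c \<Rightarrow> real) \<Rightarrow> (real \<times> real) set" where
  "Rcog_bin q W = closure (convex hull (\<Union>{Rcog_star q P | P. \<exists>PX. pmf2 PX \<and>
      P = (\<lambda>x1 x2 y. PX x1 x2 * W x1 x2 y)}))"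

definition D1 where
  "D1 q P = {f. pmf3 f \<and> m1 f = m1 P \<and> m2Y f = m2Y P \<and> Eq q f \<ge> Eq q P}"
definition D2 where
  "D2 q P = {f. pmf3 f \<and> m2 f = m2 P \<and> m1Y f = m1Y P \<and> Eq q f \<ge> Eq q P}"
definition D0 where
  "D0 q P R1 R2 = {f. pmf3 f \<and> m1 f = m1 P \<and> m2 f = m2 P \<and> mY f = mY P \<and> Eq q f \<ge> Eq q P
      \<and> I_1Y f \<le> R1 \<and> I_2Y f \<le> R2}"

definition RLM_P :: "('a::finite \<Rightarrow> 'b::finite \<Rightarrow> 'c::finite \<Rightarrow> real) \<Rightarrow> ('a \<Rightarrow> 'b \<Rightarrow> 'c \<Rightarrow> real) \<Rightarrow> (real \<times> real) set" where
  "RLM_P q P = {(R1, R2). 0 \<le> R1 \<and> 0 \<le> R2 \<and>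
      ereal R1 < (INF f\<in>D1 q P. ereal (I_1Y_2 f + I_12 f)) \<and>
      ereal R2 < (INF f\<in>D2 q P. ereal (I_2Y_1 f + I_12 f)) \<and>
      ereal (R1 + R2) < (INF f\<in>D0 q P R1 R2. ereal (I_12_Y f + I_12 f))}"

definition RLM :: "('a::finite \<Rightarrow> 'b::finite \<Rightarrow> 'c::finite \<Rightarrow> real) \<Rightarrow> ('a \<Rightarrow> 'b \<Rightarrow> 'c \<Rightarrow> real) \<Rightarrow> (real \<times> real) set" where
  "RLM q W = closure (convex hull (\<Union>{RLM_P q P | P. \<exists>P1 P2. pmf1 P1 \<and> pmf1 P2 \<and>
      P = (\<lambda>x1 x2 y. P1 x1 * P2 x2 * W x1 x2 y)}))"

end

theory Submission
  imports Defs "HOL-Real_Asymp.Real_Asymp"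
begin

text \<open>For product inputs \<open>P = P\<^sub>1 P\<^sub>2 W\<close> every pair in \<open>R\<^sub>L\<^sub>M(P)\<close> lies in
  \<open>R\<^sup>*\<^sub>c\<^sub>o\<^sub>g(P)\<close> with \<open>R\<^sub>1\<^sub>,\<^sub>a = R\<^sub>1\<close> and \<open>R\<^sub>1\<^sub>,\<^sub>b = 0\<close>. The single-user bounds hold because
  \<open>L\<^sub>1 \<subseteq> D\<^sub>(\<^sub>1\<^sub>)\<close> and \<open>L\<^sub>2 \<subseteq> D\<^sub>(\<^sub>2\<^sub>)\<close>, where the objectives agree by the chain rule
  \<open>I(X\<^sub>1;Y,X\<^sub>2) = I(X\<^sub>1;X\<^sub>2) + I(X\<^sub>1;Y|X\<^sub>2)\<close> and \<open>I(X\<^sub>1;X\<^sub>2) = 0\<close>.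
  If neither the \<open>R\<^sub>1''\<close>- nor the \<open>R\<^sub>2''\<close>-condition held, witnessed by \<open>f, g \<in> L\<^sub>0\<close>, then
  along the segment from \<open>f\<close> to \<open>g\<close>, which keeps the \<open>(X\<^sub>1,X\<^sub>2)\<close>- and \<open>Y\<close>-marginals and
  hence stays in \<open>L\<^sub>0\<close>, the continuous function \<open>I(X\<^sub>1;Y)\<close> reaches \<open>R\<^sub>1\<close> at some \<open>h\<close>.
  Convexity of \<open>I(X\<^sub>1,X\<^sub>2;Y)\<close> in the joint law for fixed marginals gives
  \<open>I\<^sub>h(X\<^sub>1,X\<^sub>2;Y) < R\<^sub>1 + R\<^sub>2\<close>, and since \<open>X\<^sub>1, X\<^sub>2\<close> are independent,
  \<open>I(X\<^sub>1;Y) + I(X\<^sub>2;Y) \<le> I(X\<^sub>1,X\<^sub>2;Y)\<close> forces \<open>I\<^sub>h(X\<^sub>2;Y) \<le> R\<^sub>2\<close>; so \<open>h \<in> D\<^sub>(\<^sub>0\<^sub>)\<close>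
  violates the sum-rate bound.\<close>

lemma continuous_on_x_ln_x: "continuous_on {0..} (\<lambda>x::real. x * ln x)"
proof (rule continuous_on_eq_continuous_within[THEN iffD2], intro ballI)
  fix x :: real assume "x \<in> {0..}"
  show "continuous (at x within {0..}) (\<lambda>x. x * ln x)"
  proof (cases "x = 0")
    case True
    have "((\<lambda>x::real. x * ln x) \<longlongrightarrow> 0) (at_right 0)" by real_asymp
    then show ?thesis using True by (simp add: continuous_within at_within_Ici_at_right)
  next
    case False
    with \<open>x \<in> {0..}\<close> have "isCont (\<lambda>x. x * ln x) x" by (intro continuous_intros) auto
    then show ?thesis by (simp add: continuous_at_imp_continuous_at_within)
  qed
qed

lemma diff_le_mult_ln_div:
  fixes a r :: real
  assumes "0 \<le> a" "0 \<le> r" "a > 0 \<Longrightarrow> r > 0"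
  shows "a - r \<le> a * ln (a / r)"
proof (cases "a = 0")
  case False
  with assms have a: "a > 0" and r: "r > 0" by auto
  have "ln (r / a) \<le> r / a - 1" using a r by (intro ln_le_minus_one) simp
  moreover have "ln (a / r) = - ln (r / a)" using a r by (simp add: ln_div)
  ultimately have "a * (1 - r / a) \<le> a * ln (a / r)" using a by (intro mult_left_mono) auto
  then show ?thesis using a by (simp add: algebra_simps)
qed (use assms in simp)

lemma mult_ln_div_convex:
  fixes a b c t :: real
  assumes "0 \<le> a" "0 \<le> b" "0 \<le> t" "t \<le> 1" "a > 0 \<Longrightarrow> c > 0" "b > 0 \<Longrightarrow> c > 0"
  shows "((1-t)*a + t*b) * ln (((1-t)*a + t*b) / c) \<le> (1-t) * (a * ln (a / c)) + t * (b * ln (b / c))"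
proof -
  define s where "s = (1-t)*a + t*b"
  have ta: "0 \<le> (1-t)*a" and tb: "0 \<le> t*b" using assms by simp_all
  show ?thesis
  proof (cases "s = 0")
    case True
    then have "(1-t)*a = 0" "t*b = 0" using ta tb by (simp_all add: s_def add_nonneg_eq_0_iff)
    then have "(1-t) * (a * ln (a / c)) = 0" "t * (b * ln (b / c)) = 0" "(1-t)*a + t*b = 0"
      by (simp_all only: mult.assoc[symmetric] mult_zero_left add_0)
    then show ?thesis by (simp only:)
  next
    case False
    with ta tb have s: "s > 0" by (simp add: s_def)
    have c: "c > 0"
      using s assms by (cases "a > 0") (auto simp: s_def zero_less_mult_iff)
    have split: "x * ln (x / c) = x * ln (x / s) + x * ln (s / c)" if "0 \<le> x" for x
      using that s c by (cases "x = 0") (auto simp: ln_div algebra_simps)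
    have "(1-t) * (a * ln (a / c)) + t * (b * ln (b / c))
        = (1-t) * (a * ln (a / s)) + t * (b * ln (b / s)) + s * ln (s / c)"
      using split[of a] split[of b] assms by (simp add: s_def algebra_simps)
    moreover have "(1-t) * (a - s) \<le> (1-t) * (a * ln (a / s))"
      using diff_le_mult_ln_div[of a s] assms s by (intro mult_left_mono) auto
    moreover have "t * (b - s) \<le> t * (b * ln (b / s))"
      using diff_le_mult_ln_div[of b s] assms s by (intro mult_left_mono) auto
    moreover have "(1-t) * (a - s) + t * (b - s) = 0"
      by (simp add: s_def algebra_simps)
    ultimately show ?thesis unfolding s_def[symmetric] by linarith
  qed
qed

lemma continuous_on_segment_mult_ln_div:
  fixes a b c :: real
  assumes "0 \<le> a" "0 \<le> b" "a > 0 \<Longrightarrow> c > 0" "b > 0 \<Longrightarrow> c > 0"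
  shows "continuous_on {0..1} (\<lambda>t. ((1-t)*a + t*b) * ln (((1-t)*a + t*b) / c))"
proof (cases "c > 0")
  case True
  have nn: "0 \<le> (1-t)*a + t*b" if "t \<in> {0..1}" for t using that assms by auto
  have split: "x * ln (x / c) = x * ln x - x * ln c" if "0 \<le> x" for x
    using that True by (cases "x = 0") (auto simp: ln_div algebra_simps)
  have "continuous_on {0..1} (\<lambda>t. ((1-t)*a + t*b) * ln ((1-t)*a + t*b) - ((1-t)*a + t*b) * ln c)"
    by (intro continuous_on_diff continuous_on_compose2[OF continuous_on_x_ln_x] continuous_intros)
       (auto simp: nn)
  then show ?thesis by (rule continuous_on_eq) (auto simp: split nn)
next
  case False
  then have "a = 0" "b = 0" using assms by force+
  then show ?thesis by simp
qed

lemma mi_eq_sum: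
  "mi p = (\<Sum>u\<in>UNIV. \<Sum>v\<in>UNIV. p u v * ln (p u v / ((\<Sum>v'\<in>UNIV. p u v') * (\<Sum>u'\<in>UNIV. p u' v))))"
  unfolding mi_def by (intro sum.cong refl) simp

lemma cmi_eq_sum:
  "cmi p = (\<Sum>u\<in>UNIV. \<Sum>v\<in>UNIV. \<Sum>w\<in>UNIV. p u v w * ln (p u v w * (\<Sum>u'\<in>UNIV. \<Sum>v'\<in>UNIV. p u' v' w)
      / ((\<Sum>v'\<in>UNIV. p u v' w) * (\<Sum>u'\<in>UNIV. p u' v w))))"
  unfolding cmi_def by (intro sum.cong refl) simp

lemma sum_UNIV_pair:
  "(\<Sum>u\<in>(UNIV::('a::finite \<times> 'b::finite) set). g u) = (\<Sum>x1\<in>UNIV. \<Sum>x2\<in>UNIV. g (x1, x2))"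
  by (simp add: sum.cartesian_product UNIV_Times_UNIV[symmetric] del: UNIV_Times_UNIV)

lemma sum_swap_inner:
  "(\<Sum>x\<in>A. \<Sum>z\<in>C. \<Sum>y\<in>B. g x y z) = (\<Sum>x\<in>A. \<Sum>y\<in>B. \<Sum>z\<in>C. g x y z)"
  by (intro sum.cong refl) (rule sum.swap)

lemma sum_rotate_231:
  "(\<Sum>y\<in>B. \<Sum>z\<in>C. \<Sum>x\<in>A. g x y z) = (\<Sum>x\<in>A. \<Sum>y\<in>B. \<Sum>z\<in>C. g x y z)"
proof -
  have "(\<Sum>y\<in>B. \<Sum>z\<in>C. \<Sum>x\<in>A. g x y z) = (\<Sum>y\<in>B. \<Sum>x\<in>A. \<Sum>z\<in>C. g x y z)"
    by (intro sum.cong refl) (rule sum.swap)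
  then show ?thesis by (simp only: sum.swap[of _ B A])
qed

lemma sum_rotate_312:
  "(\<Sum>z\<in>C. \<Sum>x\<in>A. \<Sum>y\<in>B. g x y z) = (\<Sum>x\<in>A. \<Sum>y\<in>B. \<Sum>z\<in>C. g x y z)"
proof -
  have "(\<Sum>z\<in>C. \<Sum>x\<in>A. \<Sum>y\<in>B. g x y z) = (\<Sum>x\<in>A. \<Sum>z\<in>C. \<Sum>y\<in>B. g x y z)"
    by (rule sum.swap)
  also have "\<dots> = (\<Sum>x\<in>A. \<Sum>y\<in>B. \<Sum>z\<in>C. g x y z)" by (rule sum_swap_inner)
  finally show ?thesis .
qed

lemma marginal_sums:
  "(\<Sum>x2\<in>UNIV. m12 f x1 x2) = m1 f x1" "(\<Sum>x1\<in>UNIV. m12 f x1 x2) = m2 f x2"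
  "(\<Sum>y\<in>UNIV. m1Y f x1 y) = m1 f x1" "(\<Sum>x1\<in>UNIV. m1Y f x1 y) = mY f y"
  "(\<Sum>y\<in>UNIV. m2Y f x2 y) = m2 f x2" "(\<Sum>x2\<in>UNIV. m2Y f x2 y) = mY f y"
  unfolding m12_def m1Y_def m2Y_def m1_def m2_def mY_def
  by (rule refl sum.swap)+

context
  fixes f :: "'a::finite \<Rightarrow> 'b::finite \<Rightarrow> 'c::finite \<Rightarrow> real"
begin

lemma I_12_Y_eq:
  "I_12_Y f = (\<Sum>x1\<in>UNIV. \<Sum>x2\<in>UNIV. \<Sum>y\<in>UNIV. f x1 x2 y * ln (f x1 x2 y / (m12 f x1 x2 * mY f y)))"
  by (simp add: I_12_Y_def mi_eq_sum m12_def mY_def sum_UNIV_pair)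

lemma I_1Y_eq:
  "I_1Y f = (\<Sum>x1\<in>UNIV. \<Sum>x2\<in>UNIV. \<Sum>y\<in>UNIV. f x1 x2 y * ln (m1Y f x1 y / (m1 f x1 * mY f y)))"
  (is "_ = ?rhs")
proof -
  have "I_1Y f = (\<Sum>x1\<in>UNIV. \<Sum>y\<in>UNIV. \<Sum>x2\<in>UNIV. f x1 x2 y * ln (m1Y f x1 y / (m1 f x1 * mY f y)))"
    by (simp add: I_1Y_def mi_eq_sum marginal_sums) (simp add: m1Y_def sum_distrib_right)
  also have "\<dots> = ?rhs" by (rule sum_swap_inner)
  finally show ?thesis .
qed

lemma I_2Y_eq:
  "I_2Y f = (\<Sum>x1\<in>UNIV. \<Sum>x2\<in>UNIV. \<Sum>y\<in>UNIV. f x1 x2 y * ln (m2Y f x2 y / (m2 f x2 * mY f y)))"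
  (is "_ = ?rhs")
proof -
  have "I_2Y f = (\<Sum>x2\<in>UNIV. \<Sum>y\<in>UNIV. \<Sum>x1\<in>UNIV. f x1 x2 y * ln (m2Y f x2 y / (m2 f x2 * mY f y)))"
    by (simp add: I_2Y_def mi_eq_sum marginal_sums) (simp add: m2Y_def sum_distrib_right)
  also have "\<dots> = ?rhs" by (rule sum_rotate_231)
  finally show ?thesis .
qed

lemma I_2Y_1_eq:
  "I_2Y_1 f = (\<Sum>x1\<in>UNIV. \<Sum>x2\<in>UNIV. \<Sum>y\<in>UNIV.
     f x1 x2 y * ln (f x1 x2 y * m1 f x1 / (m12 f x1 x2 * m1Y f x1 y)))"
  (is "_ = ?rhs")
proof -
  have "I_2Y_1 f = (\<Sum>x2\<in>UNIV. \<Sum>y\<in>UNIV. \<Sum>x1\<in>UNIV.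
     f x1 x2 y * ln (f x1 x2 y * m1 f x1 / (m12 f x1 x2 * m1Y f x1 y)))"
    by (simp add: I_2Y_1_def cmi_eq_sum m1_def m12_def m1Y_def)
  also have "\<dots> = ?rhs" by (rule sum_rotate_231)
  finally show ?thesis .
qed

lemma I_1Y_2_eq:
  "I_1Y_2 f = (\<Sum>x1\<in>UNIV. \<Sum>x2\<in>UNIV. \<Sum>y\<in>UNIV.
     f x1 x2 y * ln (f x1 x2 y * m2 f x2 / (m12 f x1 x2 * m2Y f x2 y)))"
  (is "_ = ?rhs")
proof -
  have "I_1Y_2 f = (\<Sum>x1\<in>UNIV. \<Sum>y\<in>UNIV. \<Sum>x2\<in>UNIV.
     f x1 x2 y * ln (f x1 x2 y * m2 f x2 / (m12 f x1 x2 * m2Y f x2 y)))"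
    by (simp add: I_1Y_2_def cmi_eq_sum m2_def m12_def m2Y_def)
  also have "\<dots> = ?rhs" by (rule sum_swap_inner)
  finally show ?thesis .
qed

lemma I_1_Y2_eq:
  "I_1_Y2 f = (\<Sum>x1\<in>UNIV. \<Sum>x2\<in>UNIV. \<Sum>y\<in>UNIV. f x1 x2 y * ln (f x1 x2 y / (m1 f x1 * m2Y f x2 y)))"
  (is "_ = ?rhs")
proof -
  have "(\<Sum>y\<in>UNIV. \<Sum>x2\<in>UNIV. f x1 x2 y) = m1 f x1" for x1
    unfolding m1_def by (rule sum.swap)
  then have "I_1_Y2 f = (\<Sum>x1\<in>UNIV. \<Sum>y\<in>UNIV. \<Sum>x2\<in>UNIV.
      f x1 x2 y * ln (f x1 x2 y / (m1 f x1 * m2Y f x2 y)))"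
    by (simp add: I_1_Y2_def mi_eq_sum sum_UNIV_pair m2Y_def)
  also have "\<dots> = ?rhs" by (rule sum_swap_inner)
  finally show ?thesis .
qed

lemma I_12_eq:
  "I_12 f = (\<Sum>x1\<in>UNIV. \<Sum>x2\<in>UNIV. \<Sum>y\<in>UNIV. f x1 x2 y * ln (m12 f x1 x2 / (m1 f x1 * m2 f x2)))"
  by (simp add: I_12_def mi_eq_sum marginal_sums) (simp add: m12_def sum_distrib_right)

end

lemma mi_product_eq_0:
  fixes \<alpha> :: "'u::finite \<Rightarrow> real" and \<beta> :: "'v::finite \<Rightarrow> real"
  assumes "(\<Sum>u\<in>UNIV. \<alpha> u) = 1" "(\<Sum>v\<in>UNIV. \<beta> v) = 1"
  shows "mi (\<lambda>u v. \<alpha> u * \<beta> v) = 0"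
proof -
  have "mi (\<lambda>u v. \<alpha> u * \<beta> v)
      = (\<Sum>u\<in>UNIV. \<Sum>v\<in>UNIV. \<alpha> u * \<beta> v * ln (\<alpha> u * \<beta> v / (\<alpha> u * \<beta> v)))"
    by (simp add: mi_eq_sum sum_distrib_left[symmetric] sum_distrib_right[symmetric] assms)
  also have "\<dots> = 0"
    by (intro sum.neutral ballI) (cases "\<alpha> u * \<beta> v = 0"; simp)
  finally show ?thesis .
qed

context
  fixes f :: "'a::finite \<Rightarrow> 'b::finite \<Rightarrow> 'c::finite \<Rightarrow> real"
  assumes nonneg: "\<And>x1 x2 y. 0 \<le> f x1 x2 y"
begin

lemma marginals_nonneg:
  "0 \<le> m12 f x1 x2" "0 \<le> m1Y f x1 y" "0 \<le> m2Y f x2 y" "0 \<le> m1 f x1" "0 \<le> m2 f x2" "0 \<le> mY f y"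
  by (auto simp: m12_def m1Y_def m2Y_def m1_def m2_def mY_def nonneg intro!: sum_nonneg)

lemma marginals_mono:
  "f x1 x2 y \<le> m12 f x1 x2" "f x1 x2 y \<le> m1Y f x1 y" "f x1 x2 y \<le> m2Y f x2 y"
  "m12 f x1 x2 \<le> m1 f x1" "m12 f x1 x2 \<le> m2 f x2"
  "m1Y f x1 y \<le> m1 f x1" "m1Y f x1 y \<le> mY f y" "m2Y f x2 y \<le> mY f y"
proof -
  show "f x1 x2 y \<le> m12 f x1 x2" "f x1 x2 y \<le> m1Y f x1 y" "f x1 x2 y \<le> m2Y f x2 y"
    unfolding m12_def m1Y_def m2Y_def by (rule member_le_sum; simp add: nonneg)+
  show "m12 f x1 x2 \<le> m1 f x1" unfolding marginal_sums(1)[symmetric]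
    by (rule member_le_sum) (simp_all add: marginals_nonneg)
  show "m12 f x1 x2 \<le> m2 f x2" unfolding marginal_sums(2)[symmetric]
    by (rule member_le_sum) (simp_all add: marginals_nonneg)
  show "m1Y f x1 y \<le> m1 f x1" unfolding marginal_sums(3)[symmetric]
    by (rule member_le_sum) (simp_all add: marginals_nonneg)
  show "m1Y f x1 y \<le> mY f y" unfolding marginal_sums(4)[symmetric]
    by (rule member_le_sum) (simp_all add: marginals_nonneg)
  show "m2Y f x2 y \<le> mY f y" unfolding marginal_sums(6)[symmetric]
    by (rule member_le_sum) (simp_all add: marginals_nonneg)
qed

lemma marginals_pos:
  assumes "f x1 x2 y > 0"
  shows "m12 f x1 x2 > 0" "m1Y f x1 y > 0" "m2Y f x2 y > 0" "m1 f x1 > 0" "m2 f x2 > 0" "mY f y > 0"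
  using assms marginals_mono(1-3)[of x1 x2 y] marginals_mono(4,5)[of x1 x2]
    marginals_mono(6,7)[of x1 y] marginals_mono(8)[of x2 y]
  by linarith+

lemma sum_mult_ln_mult:
  assumes "\<And>x1 x2 y. f x1 x2 y > 0 \<Longrightarrow>
    A x1 x2 y > 0 \<and> B x1 x2 y > 0 \<and> C x1 x2 y = A x1 x2 y * B x1 x2 y"
  shows "(\<Sum>x1\<in>UNIV. \<Sum>x2\<in>UNIV. \<Sum>y\<in>UNIV. f x1 x2 y * ln (C x1 x2 y))
    = (\<Sum>x1\<in>UNIV. \<Sum>x2\<in>UNIV. \<Sum>y\<in>UNIV. f x1 x2 y * ln (A x1 x2 y))
      + (\<Sum>x1\<in>UNIV. \<Sum>x2\<in>UNIV. \<Sum>y\<in>UNIV. f x1 x2 y * ln (B x1 x2 y))"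
  unfolding sum.distrib[symmetric]
proof (intro sum.cong refl)
  fix x1 x2 y
  show "f x1 x2 y * ln (C x1 x2 y) = f x1 x2 y * ln (A x1 x2 y) + f x1 x2 y * ln (B x1 x2 y)"
    using nonneg[of x1 x2 y] assms[of x1 x2 y] by (cases "f x1 x2 y = 0") (auto simp: ln_mult algebra_simps)
qed

lemma I_12_Y_chain_1: "I_12_Y f = I_1Y f + I_2Y_1 f"
  unfolding I_12_Y_eq I_1Y_eq I_2Y_1_eq
  by (rule sum_mult_ln_mult) (simp add: marginals_pos marginals_pos[THEN less_imp_not_eq2] field_simps)

lemma I_12_Y_chain_2: "I_12_Y f = I_2Y f + I_1Y_2 f"
  unfolding I_12_Y_eq I_2Y_eq I_1Y_2_eq
  by (rule sum_mult_ln_mult) (simp add: marginals_pos marginals_pos[THEN less_imp_not_eq2] field_simps)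

lemma I_1_Y2_chain: "I_1_Y2 f = I_12 f + I_1Y_2 f"
  unfolding I_1_Y2_eq I_12_eq I_1Y_2_eq
  by (rule sum_mult_ln_mult) (simp add: marginals_pos marginals_pos[THEN less_imp_not_eq2] field_simps)

end

lemma I_1Y_add_I_2Y_le_I_12_Y:
  fixes f :: "'a::finite \<Rightarrow> 'b::finite \<Rightarrow> 'c::finite \<Rightarrow> real"
  assumes nonneg: "\<And>x1 x2 y. 0 \<le> f x1 x2 y"
    and total: "(\<Sum>x1\<in>UNIV. \<Sum>x2\<in>UNIV. \<Sum>y\<in>UNIV. f x1 x2 y) = 1"
    and indep: "\<And>x1 x2. m12 f x1 x2 = m1 f x1 * m2 f x2"
  shows "I_1Y f + I_2Y f \<le> I_12_Y f"
proof -
  \<comment> \<open>\<open>r\<close> makes \<open>X\<^sub>1, X\<^sub>2\<close> conditionally independent given \<open>Y\<close>; the gap is the relative entropy \<open>D(f\<parallel>r) \<ge> 0\<close>.\<close>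
  define r where "r x1 x2 y = m1Y f x1 y * m2Y f x2 y / mY f y" for x1 x2 y
  note pos = marginals_pos[of f, OF nonneg] marginals_pos[of f, OF nonneg, THEN less_imp_not_eq2]
  have r_nonneg: "0 \<le> r x1 x2 y" for x1 x2 y
    unfolding r_def using marginals_nonneg[of f, OF nonneg] by simp
  have "I_12_Y f = (\<Sum>x1\<in>UNIV. \<Sum>x2\<in>UNIV. \<Sum>y\<in>UNIV.
        f x1 x2 y * ln (m1Y f x1 y / (m1 f x1 * mY f y) * (m2Y f x2 y / (m2 f x2 * mY f y))))
      + (\<Sum>x1\<in>UNIV. \<Sum>x2\<in>UNIV. \<Sum>y\<in>UNIV. f x1 x2 y * ln (f x1 x2 y / r x1 x2 y))"
    unfolding I_12_Y_eq using nonneg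
    by (rule sum_mult_ln_mult) (simp add: r_def indep pos field_simps)
  also have "(\<Sum>x1\<in>UNIV. \<Sum>x2\<in>UNIV. \<Sum>y\<in>UNIV.
        f x1 x2 y * ln (m1Y f x1 y / (m1 f x1 * mY f y) * (m2Y f x2 y / (m2 f x2 * mY f y))))
      = I_1Y f + I_2Y f"
    unfolding I_1Y_eq I_2Y_eq using nonneg by (rule sum_mult_ln_mult) (simp add: pos)
  finally have "I_12_Y f - (I_1Y f + I_2Y f)
      = (\<Sum>x1\<in>UNIV. \<Sum>x2\<in>UNIV. \<Sum>y\<in>UNIV. f x1 x2 y * ln (f x1 x2 y / r x1 x2 y))"
    by simp
  moreover have "(\<Sum>x1\<in>UNIV. \<Sum>x2\<in>UNIV. \<Sum>y\<in>UNIV. f x1 x2 y - r x1 x2 y)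
      \<le> (\<Sum>x1\<in>UNIV. \<Sum>x2\<in>UNIV. \<Sum>y\<in>UNIV. f x1 x2 y * ln (f x1 x2 y / r x1 x2 y))"
    by (intro sum_mono diff_le_mult_ln_div nonneg r_nonneg) (simp add: r_def pos)
  moreover have "(\<Sum>x1\<in>UNIV. \<Sum>x2\<in>UNIV. \<Sum>y\<in>UNIV. r x1 x2 y) = 1"
  proof -
    have "(\<Sum>x1\<in>UNIV. \<Sum>x2\<in>UNIV. r x1 x2 y) = mY f y" for y
      using marginal_sums(4,6)[of f y]
      by (cases "mY f y = 0") (simp_all add: r_def sum_product[symmetric] sum_divide_distrib[symmetric])
    moreover have "(\<Sum>y\<in>UNIV. mY f y) = 1"
      unfolding mY_def by (rule trans[OF sum_rotate_312 total])
    ultimately have "(\<Sum>y\<in>UNIV. \<Sum>x1\<in>UNIV. \<Sum>x2\<in>UNIV. r x1 x2 y) = 1"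
      by simp
    then show ?thesis by (rule trans[OF sum_rotate_312[symmetric]])
  qed
  ultimately show ?thesis using total by (simp add: sum_subtractf)
qed

definition mix :: "real \<Rightarrow> ('a::finite \<Rightarrow> 'b::finite \<Rightarrow> 'c::finite \<Rightarrow> real)
    \<Rightarrow> ('a \<Rightarrow> 'b \<Rightarrow> 'c \<Rightarrow> real) \<Rightarrow> ('a \<Rightarrow> 'b \<Rightarrow> 'c \<Rightarrow> real)"
  where "mix t f g = (\<lambda>x1 x2 y. (1-t) * f x1 x2 y + t * g x1 x2 y)"

lemma m12_mix: "m12 (mix t f g) x1 x2 = (1-t) * m12 f x1 x2 + t * m12 g x1 x2"
  by (simp add: mix_def m12_def sum.distrib sum_distrib_left)

lemma m1Y_mix: "m1Y (mix t f g) x1 y = (1-t) * m1Y f x1 y + t * m1Y g x1 y"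
  by (simp add: mix_def m1Y_def sum.distrib sum_distrib_left)

lemma mY_mix: "mY (mix t f g) y = (1-t) * mY f y + t * mY g y"
  by (simp add: mix_def mY_def sum.distrib sum_distrib_left)

lemma Eq_mix: "Eq q (mix t f g) = (1-t) * Eq q f + t * Eq q g"
proof -
  have "Eq q (mix t f g) = (\<Sum>x1\<in>UNIV. \<Sum>x2\<in>UNIV. \<Sum>y\<in>UNIV.
      (1-t) * (f x1 x2 y * q x1 x2 y) + t * (g x1 x2 y * q x1 x2 y))"
    by (simp add: Eq_def mix_def distrib_right mult.assoc)
  then show ?thesis by (simp add: Eq_def sum.distrib sum_distrib_left)
qed

lemma pmf3_mix: "pmf3 f \<Longrightarrow> pmf3 g \<Longrightarrow> 0 \<le> t \<Longrightarrow> t \<le> 1 \<Longrightarrow> pmf3 (mix t f g)"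
  by (simp add: pmf3_def mix_def sum.distrib sum_distrib_left[symmetric])

context
  fixes f g :: "'a::finite \<Rightarrow> 'b::finite \<Rightarrow> 'c::finite \<Rightarrow> real"
  assumes f_nonneg: "\<And>x1 x2 y. 0 \<le> f x1 x2 y" and g_nonneg: "\<And>x1 x2 y. 0 \<le> g x1 x2 y"
    and same_m12: "m12 g = m12 f" and same_mY: "mY g = mY f"
begin

lemma m12_mix_eq: "m12 (mix t f g) = m12 f"
  by (intro ext) (simp add: m12_mix same_m12 algebra_simps)

lemma mY_mix_eq: "mY (mix t f g) = mY f"
  by (intro ext) (simp add: mY_mix same_mY algebra_simps)

lemma same_m1: "m1 g = m1 f"
  by (intro ext) (simp add: marginal_sums(1)[symmetric] same_m12)

lemma m1_mix_eq: "m1 (mix t f g) = m1 f"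
  by (intro ext) (simp add: marginal_sums(1)[symmetric] m12_mix_eq)

lemma I_12_Y_mix_le:
  assumes "0 \<le> t" "t \<le> 1"
  shows "I_12_Y (mix t f g) \<le> (1-t) * I_12_Y f + t * I_12_Y g"
proof -
  have "I_12_Y (mix t f g) = (\<Sum>x1\<in>UNIV. \<Sum>x2\<in>UNIV. \<Sum>y\<in>UNIV.
      ((1-t) * f x1 x2 y + t * g x1 x2 y)
        * ln (((1-t) * f x1 x2 y + t * g x1 x2 y) / (m12 f x1 x2 * mY f y)))"
    by (simp add: I_12_Y_eq m12_mix_eq mY_mix_eq) (simp add: mix_def)
  also have "\<dots> \<le> (\<Sum>x1\<in>UNIV. \<Sum>x2\<in>UNIV. \<Sum>y\<in>UNIV.
      (1-t) * (f x1 x2 y * ln (f x1 x2 y / (m12 f x1 x2 * mY f y)))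
        + t * (g x1 x2 y * ln (g x1 x2 y / (m12 f x1 x2 * mY f y))))"
    using assms f_nonneg g_nonneg
      marginals_pos(1,6)[of f, OF f_nonneg] marginals_pos(1,6)[of g, OF g_nonneg]
    by (intro sum_mono mult_ln_div_convex) (auto simp: same_m12 same_mY)
  also have "\<dots> = (1-t) * I_12_Y f + t * I_12_Y g"
    by (simp add: I_12_Y_eq same_m12 same_mY sum.distrib sum_distrib_left)
  finally show ?thesis .
qed

lemma continuous_on_I_1Y_mix: "continuous_on {0..1} (\<lambda>t. I_1Y (mix t f g))"
proof -
  have m1_mY_pos: "0 < m1 h x1 * mY h y"
    if "0 < m1Y h x1 y" "\<And>x1 x2 y. 0 \<le> h x1 x2 y" for h :: "'a \<Rightarrow> 'b \<Rightarrow> 'c \<Rightarrow> real" and x1 y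
  proof -
    have "0 < m1 h x1" "0 < mY h y"
      using that(1) marginals_mono(6,7)[of h, OF that(2), of x1 y] by linarith+
    then show ?thesis by simp
  qed
  have "I_1Y (mix t f g) = (\<Sum>x1\<in>UNIV. \<Sum>y\<in>UNIV. ((1-t) * m1Y f x1 y + t * m1Y g x1 y)
      * ln (((1-t) * m1Y f x1 y + t * m1Y g x1 y) / (m1 f x1 * mY f y)))" for t
    by (simp add: I_1Y_def mi_eq_sum marginal_sums m1_mix_eq mY_mix_eq) (simp add: m1Y_mix)
  moreover have "continuous_on {0..1} (\<lambda>t. \<Sum>x1\<in>UNIV. \<Sum>y\<in>UNIV. ((1-t) * m1Y f x1 y + t * m1Y g x1 y)
      * ln (((1-t) * m1Y f x1 y + t * m1Y g x1 y) / (m1 f x1 * mY f y)))"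
    using marginals_nonneg(2)[of f, OF f_nonneg] marginals_nonneg(2)[of g, OF g_nonneg]
      m1_mY_pos[of f, OF _ f_nonneg] m1_mY_pos[of g, OF _ g_nonneg]
    by (intro continuous_on_sum continuous_on_segment_mult_ln_div) (auto simp: same_m1 same_mY)
  ultimately show ?thesis by simp
qed

end

context
  fixes W :: "'a::finite \<Rightarrow> 'b::finite \<Rightarrow> 'c::finite \<Rightarrow> real"
    and P1 :: "'a \<Rightarrow> real" and P2 :: "'b \<Rightarrow> real"
  assumes channel: "channel W" and pmf_P1: "pmf1 P1" and pmf_P2: "pmf1 P2"
begin

abbreviation P :: "'a \<Rightarrow> 'b \<Rightarrow> 'c \<Rightarrow> real"
  where "P \<equiv> \<lambda>x1 x2 y. P1 x1 * P2 x2 * W x1 x2 y"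

lemma sum_P1: "(\<Sum>x1\<in>UNIV. P1 x1) = 1" and sum_P2: "(\<Sum>x2\<in>UNIV. P2 x2) = 1"
  using pmf_P1 pmf_P2 by (simp_all add: pmf1_def)

lemma m12_P: "m12 P x1 x2 = P1 x1 * P2 x2"
  using channel by (simp add: m12_def channel_def pmf1_def sum_distrib_left[symmetric])

context
  fixes f :: "'a \<Rightarrow> 'b \<Rightarrow> 'c \<Rightarrow> real"
  assumes m12_f: "m12 f = m12 P"
begin

lemma m12_eq_product: "m12 f x1 x2 = m1 f x1 * m2 f x2"
  by (simp add: marginal_sums(1,2)[symmetric] m12_f m12_P sum_distrib_left[symmetric]
      sum_distrib_right[symmetric] sum_P1 sum_P2)

lemma I_12_eq_0: "I_12 f = 0"
proof -
  have "m12 f = (\<lambda>x1 x2. P1 x1 * P2 x2)" by (intro ext) (simp add: m12_f m12_P)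
  then show ?thesis unfolding I_12_def using mi_product_eq_0[OF sum_P1 sum_P2] by simp
qed

lemma I_21_eq_0: "I_21 f = 0"
proof -
  have "(\<lambda>x2 x1. m12 f x1 x2) = (\<lambda>x2 x1. P2 x2 * P1 x1)" by (intro ext) (simp add: m12_f m12_P)
  then show ?thesis unfolding I_21_def using mi_product_eq_0[OF sum_P2 sum_P1] by simp
qed

end

lemma L0_into_D0:
  assumes "h \<in> L0 q P" "I_1Y h \<le> R1" "I_2Y h \<le> R2"
  shows "h \<in> D0 q P R1 R2"
proof -
  have "m12 h = m12 P" using assms(1) by (simp add: L0_def Gq_def)
  then have "m1 h = m1 P" "m2 h = m2 P" by (intro ext; simp add: marginal_sums(1,2)[symmetric])+
  then show ?thesis using assms by (simp add: L0_def Gq_def D0_def)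
qed

lemma mix_in_L0:
  assumes "f \<in> L0 q P" "g \<in> L0 q P" "0 \<le> t" "t \<le> 1"
  shows "mix t f g \<in> L0 q P"
proof -
  have "pmf3 f" "pmf3 g" "m12 g = m12 f" "mY g = mY f"
    using assms(1,2) by (auto simp: L0_def Gq_def)
  then have "m12 (mix t f g) = m12 f" "mY (mix t f g) = mY f"
    by (simp_all add: m12_mix_eq mY_mix_eq pmf3_def)
  moreover have "Eq q P \<le> (1-t) * Eq q f + t * Eq q g"
  proof -
    have "Eq q P = (1-t) * Eq q P + t * Eq q P" by (simp add: algebra_simps)
    also have "\<dots> \<le> (1-t) * Eq q f + t * Eq q g"
      using assms by (intro add_mono mult_left_mono) (auto simp: L0_def Gq_def)
    finally show ?thesis .
  qed
  ultimately show ?thesis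
    using assms \<open>pmf3 f\<close> \<open>pmf3 g\<close> by (auto simp: L0_def Gq_def Eq_mix pmf3_mix)
qed

lemma ex_D0_below_sum_rate:
  assumes f: "f \<in> L0 q P" "I_1Y f + max 0 (I_2Y_1 f - R2) < R1"
    and g: "g \<in> L0 q P" "I_2Y g - I_21 g + max 0 (I_1_Y2 g - R1) < R2"
  shows "\<exists>h\<in>D0 q P R1 R2. I_12_Y h + I_12 h < R1 + R2"
proof -
  have pmf: "pmf3 f" "pmf3 g" and m12: "m12 f = m12 P" "m12 g = m12 P"
    and mY: "mY f = mY P" "mY g = mY P"
    using f(1) g(1) by (auto simp: L0_def Gq_def)
  have f_nonneg: "\<And>x1 x2 y. 0 \<le> f x1 x2 y" and g_nonneg: "\<And>x1 x2 y. 0 \<le> g x1 x2 y"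
    using pmf by (simp_all add: pmf3_def)
  have f_I_1Y: "I_1Y f < R1" and f_sum: "I_12_Y f < R1 + R2"
    using f(2) I_12_Y_chain_1[of f, OF f_nonneg] by linarith+
  have g_I_2Y: "I_2Y g < R2" and g_sum: "I_12_Y g < R1 + R2"
    using g(2) I_21_eq_0[OF m12(2)] I_12_eq_0[OF m12(2)]
      I_12_Y_chain_2[of g, OF g_nonneg] I_1_Y2_chain[of g, OF g_nonneg]
    by linarith+
  consider "I_1Y g \<le> R1" | "R1 < I_1Y g" by linarith
  then show ?thesis
  proof cases
    case 1
    then show ?thesis
      using g(1) g_I_2Y g_sum I_12_eq_0[OF m12(2)] by (intro bexI[of _ g] L0_into_D0) auto
  next
    case 2
    have "continuous_on {0..1} (\<lambda>t. I_1Y (mix t f g))"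
      using f_nonneg g_nonneg m12 mY by (intro continuous_on_I_1Y_mix) simp_all
    then obtain t where t: "0 \<le> t" "t \<le> 1" "I_1Y (mix t f g) = R1"
      using IVT'[of "\<lambda>t. I_1Y (mix t f g)" 0 R1 1] f_I_1Y 2 by (auto simp: mix_def)
    define h where "h = mix t f g"
    have h: "h \<in> L0 q P" unfolding h_def using f(1) g(1) t(1,2) by (rule mix_in_L0)
    then have m12_h: "m12 h = m12 P" and h_nonneg: "\<And>x1 x2 y. 0 \<le> h x1 x2 y"
      and h_total: "(\<Sum>x1\<in>UNIV. \<Sum>x2\<in>UNIV. \<Sum>y\<in>UNIV. h x1 x2 y) = 1"
      by (auto simp: L0_def Gq_def pmf3_def)
    have "I_12_Y h \<le> (1-t) * I_12_Y f + t * I_12_Y g"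
      unfolding h_def using f_nonneg g_nonneg m12 mY t by (intro I_12_Y_mix_le) simp_all
    also have "\<dots> < R1 + R2"
      using f_sum g_sum t by (intro convex_bound_lt) simp_all
    finally have h_sum: "I_12_Y h < R1 + R2" .
    moreover have "I_1Y h + I_2Y h \<le> I_12_Y h"
      using h_nonneg h_total m12_eq_product[OF m12_h] by (rule I_1Y_add_I_2Y_le_I_12_Y)
    ultimately have "I_2Y h \<le> R2" using t(3) by (simp add: h_def)
    then have "h \<in> D0 q P R1 R2" using h t(3) by (intro L0_into_D0) (simp_all add: h_def)
    then show ?thesis using h_sum I_12_eq_0[OF m12_h] by (intro bexI[of _ h]) simp_all
  qed
qed

lemma INF_D1_le_R1': "(INF f\<in>D1 q P. ereal (I_1Y_2 f + I_12 f)) \<le> R1' q P"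
  unfolding R1'_def
proof (rule INF_mono)
  fix f assume f: "f \<in> L1 q P"
  then have "m12 f = m12 P" "pmf3 f" by (simp_all add: L1_def Gq_def)
  then have "m1 f = m1 P" and f_nonneg: "\<And>x1 x2 y. 0 \<le> f x1 x2 y"
    by (auto intro!: ext simp: marginal_sums(1)[symmetric] pmf3_def)
  with f have "f \<in> D1 q P" by (simp add: L1_def Gq_def D1_def)
  moreover have "I_1_Y2 f = I_1Y_2 f + I_12 f" using I_1_Y2_chain[of f, OF f_nonneg] by simp
  ultimately show "\<exists>h\<in>D1 q P. ereal (I_1Y_2 h + I_12 h) \<le> ereal (I_1_Y2 f)" by auto
qed

lemma INF_D2_le_R2': "(INF f\<in>D2 q P. ereal (I_2Y_1 f + I_12 f)) \<le> R2' q P"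
  unfolding R2'_def
proof (rule INF_mono)
  fix f assume f: "f \<in> L2 q P"
  then have m12_f: "m12 f = m12 P" by (simp add: L2_def Gq_def)
  then have "m2 f = m2 P" by (auto intro!: ext simp: marginal_sums(2)[symmetric])
  with f have "f \<in> D2 q P" by (simp add: L2_def Gq_def D2_def)
  then show "\<exists>h\<in>D2 q P. ereal (I_2Y_1 h + I_12 h) \<le> ereal (I_2Y_1 f)"
    using I_12_eq_0[OF m12_f] by force
qed

lemma R1''_or_R2''_bound:
  assumes "ereal (R1 + R2) < (INF f\<in>D0 q P R1 R2. ereal (I_12_Y f + I_12 f))"
  shows "ereal R1 \<le> R1'' q P R2 \<or> ereal R2 \<le> R2'' q P R1"
proof (rule ccontr)
  assume "\<not> ?thesis"
  then have "R1'' q P R2 < ereal R1" "R2'' q P R1 < ereal R2" by (simp_all add: not_le)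
  then obtain f g where "f \<in> L0 q P" "I_1Y f + max 0 (I_2Y_1 f - R2) < R1"
    and "g \<in> L0 q P" "I_2Y g - I_21 g + max 0 (I_1_Y2 g - R1) < R2"
    unfolding R1''_def R2''_def INF_less_iff by auto
  then obtain h where "h \<in> D0 q P R1 R2" "I_12_Y h + I_12 h < R1 + R2"
    by (blast dest: ex_D0_below_sum_rate)
  then have "(INF f\<in>D0 q P R1 R2. ereal (I_12_Y f + I_12 f)) < ereal (R1 + R2)"
    by (intro INF_lower2[THEN order.strict_trans1]) auto
  with assms show False by simp
qed

lemma RLM_P_subset_Rcog_star: "RLM_P q P \<subseteq> Rcog_star q P"
proof clarify
  fix R1 R2 assume "(R1, R2) \<in> RLM_P q P"
  then have R: "0 \<le> R1" "0 \<le> R2"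
    and "ereal R1 < (INF f\<in>D1 q P. ereal (I_1Y_2 f + I_12 f))"
    and "ereal R2 < (INF f\<in>D2 q P. ereal (I_2Y_1 f + I_12 f))"
    and sum_rate: "ereal (R1 + R2) < (INF f\<in>D0 q P R1 R2. ereal (I_12_Y f + I_12 f))"
    unfolding RLM_P_def by auto
  then have "ereal R1 \<le> R1' q P" "ereal R2 \<le> R2' q P"
    using INF_D1_le_R1' INF_D2_le_R2' by (auto intro: less_imp_le order.strict_trans2)
  moreover note R1''_or_R2''_bound[OF sum_rate]
  ultimately show "(R1, R2) \<in> Rcog_star q P"
    unfolding Rcog_star_def using R by simp (rule exI[of _ R1], simp)
qed

end

theorem lemma2:
  fixes W :: "'a::finite \<Rightarrow> 'b::finite \<Rightarrow> 'c::finite \<Rightarrow> real"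
    and q :: "'a \<Rightarrow> 'b \<Rightarrow> 'c \<Rightarrow> real"
  assumes "channel W"
  shows "RLM q W \<subseteq> Rcog_bin q W"
  unfolding RLM_def Rcog_bin_def
proof (intro closure_mono hull_mono Union_least)
  fix S
  assume "S \<in> {RLM_P q P | P. \<exists>P1 P2. pmf1 P1 \<and> pmf1 P2 \<and> P = (\<lambda>x1 x2 y. P1 x1 * P2 x2 * W x1 x2 y)}"
  then obtain P1 P2 where P1: "pmf1 P1" and P2: "pmf1 P2"
    and S: "S = RLM_P q (\<lambda>x1 x2 y. P1 x1 * P2 x2 * W x1 x2 y)"
    by blast
  have "pmf2 (\<lambda>x1 x2. P1 x1 * P2 x2)"
    using P1 P2 by (simp add: pmf1_def pmf2_def sum_product[symmetric])
  with S RLM_P_subset_Rcog_star[OF assms P1 P2]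
  show "S \<subseteq> \<Union>{Rcog_star q P | P. \<exists>PX. pmf2 PX \<and> P = (\<lambda>x1 x2 y. PX x1 x2 * W x1 x2 y)}"
    by blast
qed

end
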